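(* Let $N\ge 2$ and let $p$ be a polynomial with complex coefficients of degree at most $N-1$. Let $w_1,\ldots,w_{2N-1}\in\mathbb{T}$ be mutually distinct points and let $z_1,\ldots,z_{2N-3}\in\mathbb{T}$ be mutually distinct points. Then the $4N-4$ values $$|p(w_j)|,\ j=1,\ldots,2N-1,\qquad\text{and}\qquad |p'(z_k)|,\ k=1,\ldots,2N-3,$$ determine $p$ uniquely up to a global phase factor. That is, if $q$ is another complex polynomial of degree at most $N-1$ with $|q(w_j)|=|p(w_j)|$ for all $j$ and $|q'(z_k)|=|p'(z_k)|$ for all $k$, then $q=e^{i\varphi}p$ for some $\varphi\in\mathbb{R}$.
   Context: $\mathbb{T}=\{z\in\mathbb{C}:|z|=1\}$ denotes the unit circle and $p'$ the derivative of $p$. *)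

theory Defs
  imports "HOL-Analysis.Analysis" "HOL-Computational_Algebra.Polynomial"
begin

end

theory Submission
  imports Defs "HOL-Complex_Analysis.Complex_Analysis"
begin

(* For a polynomial r of degree at most n let r~ = conj_reverse n r be its conjugate
   reversal, so that r~(z) = z^n * conj (r z) for |z| = 1.  Then r * r~ has degree
   at most 2n and equals z^n |r z|^2 on the circle; hence the moduli |p(w_j)| at
   2n+1 distinct unit points determine p p~, and the moduli |p'(z_k)| at 2n-1 points
   determine p' p'~.  With the Euler operator v = z r' we form the cross sum
   R = v r~ + r v~ and the cross difference I = v r~ - r v~.  The difference I equals
   z (r r~)' - n r r~, and R^2 = I^2 + 4 (r r~) (v v~), where v v~ = z p' p'~.  So
   R is determined up to sign; its n-th coefficient 2 * sum_i i |c_i|^2 is a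
   nonnegative real, which fixes the sign.  Thus v p~ = (R + I)/2 is determined, and
   together with p p~ this forces p' q = q' p, i.e. q = c p (Wronskian lemma);
   finally q q~ = p p~ gives |c| = 1. *)

section \<open>Conjugate reversal of a polynomial\<close>

definition conj_reverse :: "nat \<Rightarrow> complex poly \<Rightarrow> complex poly" where
  "conj_reverse n r = (\<Sum>k\<le>n. monom (cnj (coeff r (n - k))) k)"

lemma coeff_conj_reverse:
  "coeff (conj_reverse n r) j = (if j \<le> n then cnj (coeff r (n - j)) else 0)"
  unfolding conj_reverse_def coeff_sum by (simp add: coeff_monom)

lemma degree_conj_reverse: "degree (conj_reverse n r) \<le> n"
  by (rule degree_le) (simp add: coeff_conj_reverse)

lemma conj_reverse_0 [simp]: "conj_reverse n 0 = 0"
  by (rule poly_eqI) (simp add: coeff_conj_reverse)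

lemma conj_reverse_smult: "conj_reverse n (smult c r) = smult (cnj c) (conj_reverse n r)"
  by (rule poly_eqI) (simp add: coeff_conj_reverse)

lemma conj_reverse_eq_0_iff:
  assumes "degree r \<le> n"
  shows "conj_reverse n r = 0 \<longleftrightarrow> r = 0"
proof
  assume rev0: "conj_reverse n r = 0"
  show "r = 0"
  proof (rule poly_eqI)
    fix i
    show "coeff r i = coeff 0 i"
    proof (cases "i \<le> n")
      case True
      then show ?thesis
        using arg_cong[OF rev0, of "\<lambda>s. coeff s (n - i)"] by (simp add: coeff_conj_reverse)
    qed (use assms in \<open>simp add: coeff_eq_0\<close>)
  qed
qed simp

lemma conj_reverse_pCons_0:
  assumes "n \<ge> 1"
  shows "conj_reverse n (pCons 0 r) = conj_reverse (n - 1) r"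
proof (rule poly_eqI)
  fix j
  show "coeff (conj_reverse n (pCons 0 r)) j = coeff (conj_reverse (n - 1) r) j"
  proof (cases "j < n")
    case True
    then have "n - j = Suc (n - 1 - j)" by simp
    then show ?thesis using True by (simp add: coeff_conj_reverse)
  next
    case False
    then show ?thesis using assms by (auto simp: coeff_conj_reverse)
  qed
qed

lemma poly_conj_reverse:
  assumes "norm z = 1" "degree r \<le> n"
  shows "poly (conj_reverse n r) z = z ^ n * cnj (poly r z)"
proof -
  have z_cnj: "z * cnj z = 1"
    using assms(1) by (metis complex_norm_square mult.commute of_real_1 power_one)
  have poly_r: "poly r z = (\<Sum>i\<le>n. coeff r i * z ^ i)"
    using poly_as_sum_of_monoms'[OF assms(2)] by (metis (no_types, lifting) poly_monom poly_sum sum.cong)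
  have "z ^ n * cnj (poly r z) = (\<Sum>i\<le>n. cnj (coeff r i) * z ^ (n - i))"
    unfolding poly_r cnj_sum sum_distrib_left
  proof (rule sum.cong[OF refl])
    fix i assume "i \<in> {..n}"
    then have "z ^ n = z ^ (n - i) * z ^ i" by (simp add: power_add[symmetric])
    then have "z ^ n * cnj z ^ i = z ^ (n - i) * (z * cnj z) ^ i" by (simp add: power_mult_distrib)
    then show "z ^ n * cnj (coeff r i * z ^ i) = cnj (coeff r i) * z ^ (n - i)"
      using z_cnj by simp
  qed
  also have "\<dots> = (\<Sum>k\<le>n. cnj (coeff r (n - k)) * z ^ k)"
    by (rule sum.reindex_bij_witness[where i="\<lambda>k. n - k" and j="\<lambda>k. n - k"]) auto
  also have "\<dots> = poly (conj_reverse n r) z"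
    unfolding conj_reverse_def poly_sum poly_monom ..
  finally show ?thesis ..
qed

lemma degree_mult_conj_reverse: "degree r \<le> n \<Longrightarrow> degree (r * conj_reverse n r) \<le> 2 * n"
  using degree_mult_le[of r "conj_reverse n r"] degree_conj_reverse[of n r] by linarith

lemma poly_mult_conj_reverse:
  assumes "norm z = 1" "degree r \<le> n"
  shows "poly (r * conj_reverse n r) z = z ^ n * of_real ((norm (poly r z))\<^sup>2)"
  using poly_conj_reverse[OF assms] complex_norm_square[of "poly r z"]
  by (simp add: mult.commute mult.left_commute)

(* Moduli at more than 2n points of the circle determine r r~, since the difference
   of two such products has degree at most 2n. *)
lemma moduli_determine_product:
  fixes p q :: "complex poly" and S :: "complex set"
  assumes "degree p \<le> n" "degree q \<le> n" "card S > 2 * n"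
    and "\<And>z. z \<in> S \<Longrightarrow> norm z = 1"
    and "\<And>z. z \<in> S \<Longrightarrow> norm (poly q z) = norm (poly p z)"
  shows "q * conj_reverse n q = p * conj_reverse n p"
proof (rule poly_eqI_degree[where A = S])
  show "poly (q * conj_reverse n q) z = poly (p * conj_reverse n p) z" if "z \<in> S" for z
    using that assms(4,5) poly_mult_conj_reverse[OF _ assms(1)] poly_mult_conj_reverse[OF _ assms(2)]
    by simp
  show "degree (q * conj_reverse n q) < card S" "degree (p * conj_reverse n p) < card S"
    using degree_mult_conj_reverse[OF assms(1)] degree_mult_conj_reverse[OF assms(2)] assms(3)
    by linarith+
qed

section \<open>The Euler operator and the cross sum and cross difference\<close>

definition euler :: "complex poly \<Rightarrow> complex poly" where
  "euler r = pCons 0 (pderiv r)"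

lemma coeff_euler: "coeff (euler r) i = of_nat i * coeff r i"
  by (cases i) (simp_all add: euler_def coeff_pderiv)

(* z (r~)' = n r~ - (z r')~: the reversal turns the exponent i into n - i. *)
lemma euler_conj_reverse:
  "euler (conj_reverse n r) = smult (of_nat n) (conj_reverse n r) - conj_reverse n (euler r)"
  by (rule poly_eqI) (auto simp: coeff_euler coeff_conj_reverse of_nat_diff algebra_simps)

lemma euler_mult: "euler (r * s) = euler r * s + r * euler s"
  unfolding euler_def pderiv_mult by (simp add: mult_pCons_left mult_pCons_right add.commute)

lemma euler_product:
  assumes "n \<ge> 1"
  shows "euler r * conj_reverse n (euler r) = pCons 0 (pderiv r * conj_reverse (n - 1) (pderiv r))"
  unfolding euler_def conj_reverse_pCons_0[OF assms] by (simp add: mult_pCons_left)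

definition cross_sum :: "nat \<Rightarrow> complex poly \<Rightarrow> complex poly" where
  "cross_sum n r = euler r * conj_reverse n r + r * conj_reverse n (euler r)"

definition cross_diff :: "nat \<Rightarrow> complex poly \<Rightarrow> complex poly" where
  "cross_diff n r = euler r * conj_reverse n r - r * conj_reverse n (euler r)"

lemma cross_diff_eq:
  "cross_diff n r = euler (r * conj_reverse n r) - smult (of_nat n) (r * conj_reverse n r)"
  unfolding cross_diff_def euler_mult euler_conj_reverse by (simp add: algebra_simps)

lemma cross_sum_square:
  "(cross_sum n r)\<^sup>2 = (cross_diff n r)\<^sup>2
     + 4 * (r * conj_reverse n r) * (euler r * conj_reverse n (euler r))"
  unfolding cross_sum_def cross_diff_def by (simp add: power2_eq_square algebra_simps)

lemma coeff_cross_sum: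
  "coeff (cross_sum n r) n = of_real (2 * (\<Sum>i\<le>n. real i * (norm (coeff r i))\<^sup>2))"
proof -
  have "coeff (cross_sum n r) n
        = (\<Sum>i\<le>n. of_nat i * coeff r i * cnj (coeff r i) + coeff r i * cnj (of_nat i * coeff r i))"
    unfolding cross_sum_def coeff_add coeff_mult sum.distrib[symmetric]
    by (rule sum.cong) (auto simp: coeff_conj_reverse coeff_euler)
  also have "\<dots> = (\<Sum>i\<le>n. of_real (2 * (real i * (norm (coeff r i))\<^sup>2)))"
  proof (rule sum.cong[OF refl])
    fix i
    show "of_nat i * coeff r i * cnj (coeff r i) + coeff r i * cnj (of_nat i * coeff r i)
          = complex_of_real (2 * (real i * (norm (coeff r i))\<^sup>2))"
      using complex_norm_square[of "coeff r i"] by simp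
  qed
  finally show ?thesis by (simp add: sum_distrib_left)
qed

(* If the middle coefficient vanishes, r is constant and the cross sum is zero. *)
lemma cross_sum_eq_0:
  assumes "degree r \<le> n" "(\<Sum>i\<le>n. real i * (norm (coeff r i))\<^sup>2) = 0"
  shows "cross_sum n r = 0"
proof -
  have "\<forall>i\<in>{..n}. real i * (norm (coeff r i))\<^sup>2 = 0"
    using assms(2) by (subst sum_nonneg_eq_0_iff[symmetric]) auto
  then have vanish: "i = 0 \<or> coeff r i = 0" if "i \<le> n" for i
    using that by auto
  have "euler r = 0"
  proof (rule poly_eqI)
    fix i
    show "coeff (euler r) i = coeff 0 i"
      using assms(1) vanish[of i] by (cases "i \<le> n") (auto simp: coeff_euler coeff_eq_0)
  qed
  then show ?thesis unfolding cross_sum_def by simp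
qed

(* The sign ambiguity of the cross sum is resolved by its nonnegative middle coefficient. *)
lemma cross_sum_eq_of_square_eq:
  assumes "degree p \<le> n" "degree q \<le> n" "(cross_sum n q)\<^sup>2 = (cross_sum n p)\<^sup>2"
  shows "cross_sum n q = cross_sum n p"
proof -
  have "(cross_sum n q - cross_sum n p) * (cross_sum n q + cross_sum n p) = 0"
    using assms(3) by (simp add: power2_eq_square algebra_simps)
  then consider "cross_sum n q = cross_sum n p" | "cross_sum n q = - cross_sum n p"
    by (auto simp: eq_neg_iff_add_eq_0)
  then show ?thesis
  proof cases
    case 2
    define S where "S r = (\<Sum>i\<le>n. real i * (norm (coeff r i))\<^sup>2)" for r :: "complex poly"
    have "coeff (cross_sum n q) n = - coeff (cross_sum n p) n" using 2 by simp
    then have "complex_of_real (2 * S q) = complex_of_real (- (2 * S p))"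
      unfolding coeff_cross_sum S_def of_real_minus .
    then have "2 * S q = - (2 * S p)" by (simp only: of_real_eq_iff)
    moreover have "S p \<ge> 0" "S q \<ge> 0" unfolding S_def by (auto intro: sum_nonneg)
    ultimately have "S p = 0" "S q = 0" by linarith+
    then show ?thesis using cross_sum_eq_0 assms(1,2) unfolding S_def by metis
  qed
qed

lemma products_determine_mixed_product:
  assumes "n \<ge> 1" "degree p \<le> n" "degree q \<le> n"
    and prod: "q * conj_reverse n q = p * conj_reverse n p"
    and prod_deriv: "pderiv q * conj_reverse (n - 1) (pderiv q)
                     = pderiv p * conj_reverse (n - 1) (pderiv p)"
  shows "euler q * conj_reverse n q = euler p * conj_reverse n p"
proof -
  have diff: "cross_diff n q = cross_diff n p"
    unfolding cross_diff_eq prod ..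
  have "cross_sum n q = cross_sum n p"
    using assms(2,3) by (rule cross_sum_eq_of_square_eq)
      (simp only: cross_sum_square diff prod euler_product[OF assms(1)] prod_deriv)
  then have "cross_sum n q + cross_diff n q = cross_sum n p + cross_diff n p"
    using diff by simp
  then show ?thesis unfolding cross_sum_def cross_diff_def by (simp add: algebra_simps)
qed

section \<open>The Wronskian lemma\<close>

lemma lead_coeff_pderiv:
  fixes p :: "'a::{comm_semiring_1, semiring_no_zero_divisors, semiring_char_0} poly"
  shows "lead_coeff (pderiv p) = of_nat (degree p) * lead_coeff p"
proof (cases "degree p")
  case 0
  then show ?thesis using pderiv_eq_0_iff[of p] by simp
qed (simp add: degree_pderiv coeff_pderiv)

lemma degree_eq_of_wronskian_0:
  fixes p q :: "'a::field_char_0 poly"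
  assumes "p \<noteq> 0" "q \<noteq> 0" "pderiv p * q = pderiv q * p"
  shows "degree p = degree q"
proof (cases "degree p = 0 \<or> degree q = 0")
  case True
  then show ?thesis using assms(3) pderiv_eq_0_iff[of p] pderiv_eq_0_iff[of q] assms(1,2)
    by (metis mult_eq_0_iff)
next
  case False
  have "lead_coeff (pderiv p * q) = lead_coeff (pderiv q * p)" using assms(3) by simp
  then have "of_nat (degree p) * lead_coeff p * lead_coeff q
             = of_nat (degree q) * lead_coeff q * lead_coeff p"
    by (simp add: lead_coeff_mult lead_coeff_pderiv)
  then show ?thesis using assms(1,2) by simp
qed

lemma wronskian_0_imp_smult:
  fixes p q :: "'a::field_char_0 poly"
  assumes "p \<noteq> 0" "pderiv p * q = pderiv q * p"
  shows "\<exists>c. q = smult c p"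
proof (cases "q = 0")
  case True
  then show ?thesis by (intro exI[of _ 0]) simp
next
  case False
  define c where "c = lead_coeff q / lead_coeff p"
  define d where "d = q - smult c p"
  have wr_d: "pderiv p * d = pderiv d * p"
    unfolding d_def using assms(2) by (simp add: pderiv_diff pderiv_smult algebra_simps)
  have "degree q = degree p" using degree_eq_of_wronskian_0[OF assms(1) False assms(2)] by simp
  then have lead_d: "coeff d (degree p) = 0" using assms(1) by (simp add: d_def c_def)
  have "d = 0"
  proof (rule ccontr)
    assume "d \<noteq> 0"
    then have "degree p = degree d" using degree_eq_of_wronskian_0[OF assms(1) _ wr_d] by simp
    with lead_d \<open>d \<noteq> 0\<close> show False by simp
  qed
  then show ?thesis unfolding d_def by auto
qed

section \<open>Recovering p up to a phase\<close>

lemma phase_from_products: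
  assumes "degree p \<le> n" "degree q \<le> n"
    and prod: "q * conj_reverse n q = p * conj_reverse n p"
    and mixed: "euler q * conj_reverse n q = euler p * conj_reverse n p"
  shows "\<exists>\<phi>::real. q = smult (exp (\<i> * complex_of_real \<phi>)) p"
proof (cases "p = 0")
  case True
  then show ?thesis using prod conj_reverse_eq_0_iff[OF assms(2)] by (auto intro: exI[of _ 0])
next
  case False
  have rev_p: "conj_reverse n p \<noteq> 0" using conj_reverse_eq_0_iff[OF assms(1)] False by simp
  have "conj_reverse n p * (euler p * q - euler q * p)
        = euler q * (q * conj_reverse n q) - euler q * (p * conj_reverse n p)"
    using mixed by (simp add: algebra_simps)
  then have "euler p * q = euler q * p" using rev_p prod by simp
  then have "pderiv p * q = pderiv q * p" unfolding euler_def by simp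
  then obtain c where c: "q = smult c p" using wronskian_0_imp_smult[OF False] by blast
  have "smult (c * cnj c) (p * conj_reverse n p) = p * conj_reverse n p"
    using prod unfolding c conj_reverse_smult mult_smult_left mult_smult_right smult_smult
    by (simp add: mult.commute)
  then have "smult (c * cnj c - 1) (p * conj_reverse n p) = 0" by (simp add: smult_diff_left)
  then have "complex_of_real ((norm c)\<^sup>2) = 1"
    using False rev_p unfolding complex_norm_square by simp
  then have "norm c = 1"
    using norm_ge_zero[of c] by (auto simp only: of_real_eq_1_iff power2_eq_1_iff)
  then show ?thesis using c complex_norm_eq_1_exp_eq[of c] by (intro exI[of _ "Arg c"]) simp
qed

theorem theorem1p1:
  fixes N :: nat and p q :: "complex poly"
    and w :: "nat \<Rightarrow> complex" and z :: "nat \<Rightarrow> complex"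
  assumes "N \<ge> 2"
    and "degree p \<le> N - 1" and "degree q \<le> N - 1"
    and "\<And>j. j \<in> {1..2*N-1} \<Longrightarrow> norm (w j) = 1"
    and "inj_on w {1..2*N-1}"
    and "\<And>k. k \<in> {1..2*N-3} \<Longrightarrow> norm (z k) = 1"
    and "inj_on z {1..2*N-3}"
    and "\<And>j. j \<in> {1..2*N-1} \<Longrightarrow> norm (poly q (w j)) = norm (poly p (w j))"
    and "\<And>k. k \<in> {1..2*N-3} \<Longrightarrow> norm (poly (pderiv q) (z k)) = norm (poly (pderiv p) (z k))"
  shows "\<exists>\<phi>::real. q = smult (exp (\<i> * complex_of_real \<phi>)) p"
proof -
  define n where "n = N - 1"
  have "n \<ge> 1" using assms(1) unfolding n_def by simp
  have deg: "degree p \<le> n" "degree q \<le> n" using assms(2,3) unfolding n_def by auto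
  then have deg': "degree (pderiv p) \<le> n - 1" "degree (pderiv q) \<le> n - 1"
    by (auto simp: degree_pderiv)
  have card_w: "card (w ` {1..2*N-1}) > 2 * n"
    using card_image[OF assms(5)] assms(1) unfolding n_def by simp
  have card_z: "card (z ` {1..2*N-3}) > 2 * (n - 1)"
    using card_image[OF assms(7)] assms(1) unfolding n_def by simp
  have prod: "q * conj_reverse n q = p * conj_reverse n p"
    using deg card_w by (rule moduli_determine_product) (use assms(4,8) in auto)
  have prod_deriv: "pderiv q * conj_reverse (n - 1) (pderiv q)
                    = pderiv p * conj_reverse (n - 1) (pderiv p)"
    using deg' card_z by (rule moduli_determine_product) (use assms(6,9) in auto)
  have "euler q * conj_reverse n q = euler p * conj_reverse n p"
    using \<open>n \<ge> 1\<close> deg prod prod_deriv by (rule products_determine_mixed_product)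
  then show ?thesis using deg prod by (intro phase_from_products)
qed

end
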